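(* Assume the standing setting with (H1), (H2), (P). Let $\lambda\ge e^{h(f)+\inf\phi}$ be an eigenvalue of $\mathcal L_\phi^*$ and $\nu$ a Borel probability with $\mathcal L_\phi^*\nu=\lambda\nu$. For $n\ge1$ let $B(n)=\{x\in M:\frac1n\#\{0\le j\le n-1: f^j(x)\in\mathcal A\}\ge\gamma\}$. Then $\nu(B(n))$ decreases exponentially fast as $n\to\infty$ (indeed $\nu(B(n))\le e^{-\varepsilon_0 n/2}$ for all large $n$); consequently $\nu$-almost every point belongs to $B(n)$ for at most finitely many $n$.
   Context: Standing setting. $(M,d)$ is a compact metric space of dimension $m$ in which the Besicovitch covering lemma holds. $f:M\to M$ is a local homeomorphism such that every point has finitely many preimages, each set $\{x:\#f^{-1}(x)=k\}$ is closed, and there is a bounded function $L:M\to(0,\infty)$ such that every $x\in M$ has a neighbourhood $U_x$ on which $f$ is injective and $d(f_x^{-1}(y),f_x^{-1}(z))\le L(x)\,d(y,z)$ for all $y,z\in f(U_x)$, where $f_x^{-1}$ is the inverse of $f|_{U_x}$. Let $h(f)=\liminf_{n\to\infty}\frac1n\log\min_{x\in M}\#f^{-n}(x)$; it is assumed that every point of $M$ has at least $e^{h(f)}$ preimages. $\phi:M\to\mathbb R$ is Hölder continuous. Hypotheses: (H2) there is a cover $\mathcal P=\{P_1,\dots,P_{k_0}\}$ of $M$ by sets on which $f$ is injective and an open set $\mathcal A\subset P_1\cup\dots\cup P_q$ for some integer $q<e^{h(f)}$. (P) $\sup\phi-\inf\phi<h(f)-\log q$. For $\gamma\in(0,1)$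 let $I(\gamma,n)$ be the set of $(i_0,\dots,i_{n-1})\in\{1,\dots,k_0\}^n$ with $\#\{0\le j\le n-1: i_j\le q\}>\gamma n$ and $c_\gamma=\limsup_n\frac1n\log\#I(\gamma,n)$. Fix $\varepsilon_0>0$ with $\sup\phi-\inf\phi+\varepsilon_0<h(f)-\log q$ and $\gamma\in(0,1)$ with $c_\gamma<\log q+\varepsilon_0/4$. (H1) there are constants $\sigma>1$, $L>0$, $c>0$ with $L(x)\le L$ for $x\in\mathcal A$, $L(x)\le\sigma^{-1}$ for $x\in M\setminus\mathcal A$, $\sigma^{-(1-\gamma)}L^\gamma<e^{-2c}<1$, and $\sup\phi-\inf\phi<h(f)-\log q-\varepsilon_0-m\log L$. $\mathcal L_\phi g(x)=\sum_{f(y)=x}e^{\phi(y)}g(y)$ on $C(M)$ and $\mathcal L_\phi^*$ is its dual acting on measures: $\int g\,d(\mathcal L_\phi^*\eta)=\int\mathcal L_\phi g\,d\eta$. *)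

theory Defs
  imports "HOL-Analysis.Analysis" "HOL-Probability.Probability"
begin

definition covering_dim_le :: "'a::metric_space set \<Rightarrow> nat \<Rightarrow> bool" where
  "covering_dim_le M m \<longleftrightarrow>
     (\<forall>U. finite U \<and> (\<forall>u\<in>U. openin (top_of_set M) u) \<and> M \<subseteq> \<Union>U \<longrightarrow>
        (\<exists>V. finite V \<and> (\<forall>v\<in>V. openin (top_of_set M) v) \<and> M \<subseteq> \<Union>V \<and>
             (\<forall>v\<in>V. \<exists>u\<in>U. v \<subseteq> u) \<and> (\<forall>x\<in>M. card {v\<in>V. x \<in> v} \<le> m + 1)))"

definition covering_dim :: "'a::metric_space set \<Rightarrow> nat \<Rightarrow> bool" where
  "covering_dim M m \<longleftrightarrow> covering_dim_le M m \<and> (\<forall>k<m. \<not> covering_dim_le M k)"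

definition besicovitch_property :: "'a::metric_space set \<Rightarrow> bool" where
  "besicovitch_property M \<longleftrightarrow>
     (\<exists>N::nat. \<forall>S r. S \<subseteq> M \<and> (\<forall>x\<in>S. r x > (0::real)) \<and> bdd_above (r ` S) \<longrightarrow>
        (\<exists>C\<subseteq>S. countable C \<and> S \<subseteq> (\<Union>x\<in>C. cball x (r x)) \<and>
            (\<forall>y\<in>M. finite {x\<in>C. y \<in> cball x (r x)} \<and> card {x\<in>C. y \<in> cball x (r x)} \<le> N)))"

definition local_homeomorphism_on :: "'a::metric_space set \<Rightarrow> ('a \<Rightarrow> 'a) \<Rightarrow> bool" where
  "local_homeomorphism_on M f \<longleftrightarrow> f ` M \<subseteq> M \<and>
     (\<forall>x\<in>M. \<exists>U. x \<in> U \<and> openin (top_of_set M) U \<and> openin (top_of_set M) (f ` U) \<and>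
        homeomorphism U (f ` U) f (inv_into U f))"

definition preim :: "'a set \<Rightarrow> ('a \<Rightarrow> 'a) \<Rightarrow> 'a \<Rightarrow> 'a set" where
  "preim M f x = {y\<in>M. f y = x}"

text \<open>h(f) = liminf (1/n) log min_x #f^{-n}(x) (the value is finite in the setting;
  we take the real part of the extended-real liminf).\<close>
definition degree_entropy :: "'a set \<Rightarrow> ('a \<Rightarrow> 'a) \<Rightarrow> real" where
  "degree_entropy M f =
     real_of_ereal (liminf (\<lambda>n. ereal (ln (real (INF x\<in>M. card (preim M (f ^^ n) x))) / real n)))"

definition holder_continuous_on :: "'a::metric_space set \<Rightarrow> ('a \<Rightarrow> real) \<Rightarrow> bool" where
  "holder_continuous_on M \<phi> \<longleftrightarrow>
     (\<exists>C \<alpha>. C \<ge> 0 \<and> \<alpha> > 0 \<and> (\<forall>x\<in>M. \<forall>y\<in>M. \<bar>\<phi> x - \<phi> y\<bar> \<le> C * dist x y powr \<alpha>))"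

definition transfer_op :: "'a set \<Rightarrow> ('a \<Rightarrow> 'a) \<Rightarrow> ('a \<Rightarrow> real) \<Rightarrow> ('a \<Rightarrow> real) \<Rightarrow> 'a \<Rightarrow> real" where
  "transfer_op M f \<phi> g x = (\<Sum>y\<in>preim M f x. exp (\<phi> y) * g y)"

definition itin_set :: "nat \<Rightarrow> nat \<Rightarrow> real \<Rightarrow> nat \<Rightarrow> nat list set" where
  "itin_set k0 q \<gamma> n = {is. length is = n \<and> set is \<subseteq> {1..k0} \<and>
       real (card {j. j < n \<and> is ! j \<le> q}) > \<gamma> * real n}"

text \<open>c_gamma = limsup (1/n) log #I(gamma,n), with log 0 = -infinity.\<close>
definition c_gamma :: "nat \<Rightarrow> nat \<Rightarrow> real \<Rightarrow> ereal" where
  "c_gamma k0 q \<gamma> = limsup (\<lambda>n. if card (itin_set k0 q \<gamma> n) = 0 then -\<infinity>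
        else ereal (ln (real (card (itin_set k0 q \<gamma> n))) / real n))"

definition freq_set :: "'a set \<Rightarrow> ('a \<Rightarrow> 'a) \<Rightarrow> 'a set \<Rightarrow> real \<Rightarrow> nat \<Rightarrow> 'a set" where
  "freq_set M f A \<gamma> n = {x\<in>M. real (card {j. j < n \<and> (f ^^ j) x \<in> A}) / real n \<ge> \<gamma>}"

end

theory Submission
  imports Defs "HOL-Real_Asymp.Real_Asymp"
begin

text \<open>
  Let B(n) be the set of points whose orbit visits A at least gamma n times among the
  first n iterates.  For a continuous g with 0 \<le> g \<le> 1 vanishing off the open set B(n), the
  eigenmeasure equation gives lam^n \<integral> g d\<nu> = \<integral> L^n g d\<nu>, and L^n g(x) \<le> exp (n sup \<phi>) times the
  number of n-th preimages of x lying in B(n).  Coding preimages by their itineraries through the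
  injectivity domains P_1, ..., P_k0 bounds this number by the number of words with at least
  gamma n letters \<le> q, which grows like exp (n (c_gamma + o(1))).  Approximating the indicator of
  B(n) by such g yields \<nu>(B(n)) \<le> exp (n (sup \<phi> + log q + \<epsilon>0/2 - h - inf \<phi>)) \<le> exp (-\<epsilon>0 n/2),
  and Borel--Cantelli gives the almost sure statement.
\<close>

lemma at_within_openin:
  assumes "openin (top_of_set M) U" "x \<in> U"
  shows "at x within M = at x within U"
proof -
  obtain T where T: "open T" "U = M \<inter> T" using assms(1) by (auto simp: openin_open)
  show ?thesis by (rule at_within_nhd[of x T]) (use T assms(2) in auto)
qed

lemma eventually_in_openin:
  assumes "openin (top_of_set M) U" "x \<in> U"
  shows "eventually (\<lambda>y. y \<in> U) (at x within M)"
  unfolding at_within_openin[OF assms] eventually_at_filter by simp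

lemma holder_continuous_on_imp_continuous_on:
  assumes "holder_continuous_on M \<phi>"
  shows "continuous_on M \<phi>"
proof -
  obtain C \<alpha> where C: "\<alpha> > 0" "\<forall>x\<in>M. \<forall>y\<in>M. \<bar>\<phi> x - \<phi> y\<bar> \<le> C * dist x y powr \<alpha>"
    using assms by (auto simp: holder_continuous_on_def)
  show ?thesis unfolding continuous_on_def
  proof
    fix x assume x: "x \<in> M"
    have "((\<lambda>y. dist y x powr \<alpha>) \<longlongrightarrow> 0) (at x within M)"
      by (rule tendsto_zero_powrI) (auto intro!: tendsto_dist_iff[THEN iffD1] C(1))
    then have "((\<lambda>y. C * dist y x powr \<alpha>) \<longlongrightarrow> 0) (at x within M)"
      using tendsto_mult_left[of _ 0 _ C] by fastforce
    moreover have "\<forall>\<^sub>F y in at x within M. norm (\<phi> y - \<phi> x) \<le> C * dist y x powr \<alpha>"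
      unfolding eventually_at_filter using C(2) x by simp
    ultimately have "((\<lambda>y. \<phi> y - \<phi> x) \<longlongrightarrow> 0) (at x within M)"
      by (rule Lim_null_comparison[rotated])
    then show "(\<phi> \<longlongrightarrow> \<phi> x) (at x within M)" by (simp add: LIM_zero_iff)
  qed
qed

lemma eventually_distinct_of_tendsto:
  fixes g :: "'a::metric_space \<Rightarrow> 'b \<Rightarrow> 'a"
  assumes "finite Y" and lim: "\<And>y. y \<in> Y \<Longrightarrow> (g y \<longlongrightarrow> y) F"
  shows "eventually (\<lambda>x. \<forall>y\<in>Y. \<forall>y'\<in>Y. y \<noteq> y' \<longrightarrow> g y x \<noteq> g y' x) F"
proof -
  have "eventually (\<lambda>x. \<forall>(y, y')\<in>Y \<times> Y. y \<noteq> y' \<longrightarrow> g y x \<noteq> g y' x) F"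
  proof (rule eventually_ball_finite, safe)
    show "finite (Y \<times> Y)" using \<open>finite Y\<close> by simp
    fix y y' assume yy': "y \<in> Y" "y' \<in> Y"
    show "eventually (\<lambda>x. y \<noteq> y' \<longrightarrow> g y x \<noteq> g y' x) F"
    proof (cases "y = y'")
      case False
      have "((\<lambda>x. dist (g y x) (g y' x)) \<longlongrightarrow> dist y y') F"
        using yy' by (intro tendsto_dist lim)
      then have "eventually (\<lambda>x. 0 < dist (g y x) (g y' x)) F"
        using False by (intro order_tendstoD(1)) auto
      then show ?thesis by eventually_elim auto
    qed simp
  qed
  then show ?thesis by (rule eventually_mono) auto
qed

lemma freq_set_eq_Union:
  assumes "n \<noteq> 0"
  shows "freq_set M f A \<gamma> n =
    (\<Union>J\<in>{J. J \<subseteq> {..<n} \<and> \<gamma> * real n \<le> real (card J)}. M \<inter> (\<Inter>j\<in>J. (f ^^ j) -` A))"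
proof (intro equalityI subsetI)
  fix x assume x: "x \<in> freq_set M f A \<gamma> n"
  define J where "J = {j. j < n \<and> (f ^^ j) x \<in> A}"
  have "J \<subseteq> {..<n}" "\<gamma> * real n \<le> real (card J)" "x \<in> M \<inter> (\<Inter>j\<in>J. (f ^^ j) -` A)"
    using x assms by (auto simp: freq_set_def J_def pos_le_divide_eq)
  then show "x \<in> (\<Union>J\<in>{J. J \<subseteq> {..<n} \<and> \<gamma> * real n \<le> real (card J)}. M \<inter> (\<Inter>j\<in>J. (f ^^ j) -` A))"
    by blast
next
  fix x assume "x \<in> (\<Union>J\<in>{J. J \<subseteq> {..<n} \<and> \<gamma> * real n \<le> real (card J)}. M \<inter> (\<Inter>j\<in>J. (f ^^ j) -` A))"
  then obtain J where J: "J \<subseteq> {..<n}" "\<gamma> * real n \<le> real (card J)" "x \<in> M"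
    "\<And>j. j \<in> J \<Longrightarrow> (f ^^ j) x \<in> A" by blast
  have "card J \<le> card {j. j < n \<and> (f ^^ j) x \<in> A}"
    using J by (intro card_mono) auto
  then have "\<gamma> * real n \<le> real (card {j. j < n \<and> (f ^^ j) x \<in> A})"
    using J(2) by linarith
  then show "x \<in> freq_set M f A \<gamma> n"
    using assms J(3) by (simp add: freq_set_def pos_le_divide_eq)
qed

section \<open>Local homeomorphisms with finitely many preimages\<close>

text \<open>No expansion or Lipschitz hypothesis is needed for the counting argument.\<close>
locale finite_local_homeo =
  fixes M :: "'a::metric_space set" and f :: "'a \<Rightarrow> 'a"
  assumes compact_M: "compact M"
    and local_homeo: "local_homeomorphism_on M f"
    and finite_fibres: "\<forall>x\<in>M. finite (preim M f x)"
    and closed_fibre_card: "\<forall>k. closedin (top_of_set M) {x\<in>M. card (preim M f x) = k}"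
begin

lemma maps_into: "f ` M \<subseteq> M"
  using local_homeo by (simp add: local_homeomorphism_on_def)

lemma funpow_in: "x \<in> M \<Longrightarrow> (f ^^ n) x \<in> M"
  by (induction n) (use maps_into in auto)

lemma local_chart:
  assumes "x \<in> M"
  obtains U where "x \<in> U" "openin (top_of_set M) U" "openin (top_of_set M) (f ` U)"
    "homeomorphism U (f ` U) f (inv_into U f)"
  using local_homeo assms by (auto simp: local_homeomorphism_on_def)

lemma finite_preim: "finite (preim M f x)"
proof (cases "x \<in> M")
  case True
  then show ?thesis using finite_fibres by blast
next
  case False
  then have "preim M f x = {}" using maps_into by (auto simp: preim_def)
  then show ?thesis by simp
qed

lemma finite_preim_funpow: "finite (preim M (f ^^ n) x)"
proof (induction n arbitrary: x)
  case 0
  have "preim M (f ^^ 0) x \<subseteq> {x}" by (auto simp: preim_def)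
  then show ?case using finite_subset by blast
next
  case (Suc n)
  have "preim M (f ^^ Suc n) x \<subseteq> (\<Union>z\<in>preim M f x. preim M (f ^^ n) z)"
    by (auto simp: preim_def funpow_in)
  moreover have "finite (\<Union>z\<in>preim M f x. preim M (f ^^ n) z)"
    using finite_preim Suc by blast
  ultimately show ?case using finite_subset by blast
qed

lemma continuous_on_f: "continuous_on M f"
  unfolding continuous_on_def
proof
  fix x assume "x \<in> M"
  then obtain U where U: "x \<in> U" "openin (top_of_set M) U" "openin (top_of_set M) (f ` U)"
      "homeomorphism U (f ` U) f (inv_into U f)"
    by (rule local_chart)
  then have "(f \<longlongrightarrow> f x) (at x within U)" by (simp add: homeomorphism_def continuous_on_def)
  then show "(f \<longlongrightarrow> f x) (at x within M)" using at_within_openin[OF U(2,1)] by simp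
qed

lemma continuous_on_funpow: "continuous_on M (f ^^ n)"
proof (induction n)
  case (Suc n)
  have "continuous_on M (f \<circ> (f ^^ n))"
    by (rule continuous_on_compose[OF Suc], rule continuous_on_subset[OF continuous_on_f])
      (use funpow_in in auto)
  then show ?case by simp
qed (simp add: continuous_on_id)

text \<open>Compactness and local injectivity bound the number of preimages uniformly.\<close>
lemma fibre_card_bounded: "\<exists>N. \<forall>x. card (preim M f x) \<le> N"
proof -
  have "\<exists>T. open T \<and> x \<in> T \<and> inj_on f (M \<inter> T)" if x: "x \<in> M" for x
  proof -
    obtain U where U: "x \<in> U" "openin (top_of_set M) U" "openin (top_of_set M) (f ` U)"
        "homeomorphism U (f ` U) f (inv_into U f)"
      using x by (rule local_chart)
    obtain T where T: "open T" "U = M \<inter> T" using U(2) by (auto simp: openin_open)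
    have "inj_on f U" using U(4) unfolding homeomorphism_def by (metis inj_on_inverseI)
    then show ?thesis using T U(1) by auto
  qed
  then obtain T where T: "\<forall>x\<in>M. open (T x) \<and> x \<in> T x \<and> inj_on f (M \<inter> T x)" by metis
  obtain D where D: "D \<subseteq> M" "finite D" "M \<subseteq> \<Union>(T ` D)"
    using compactE_image[OF compact_M, of M T] T by blast
  have "card (preim M f x) \<le> card D" for x
  proof -
    have piece: "card (preim M f x \<inter> T d) \<le> 1" if "d \<in> D" for d
    proof -
      have "inj_on f (preim M f x \<inter> T d)"
        using T D(1) that by (auto simp: preim_def intro: inj_on_subset)
      moreover have "card (f ` (preim M f x \<inter> T d)) \<le> card {x}"
        by (rule card_mono) (auto simp: preim_def)
      ultimately show ?thesis by (simp add: card_image)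
    qed
    have cover: "preim M f x = (\<Union>d\<in>D. preim M f x \<inter> T d)"
      using D(3) by (auto simp: preim_def)
    have "card (preim M f x) \<le> (\<Sum>d\<in>D. card (preim M f x \<inter> T d))"
      by (subst cover) (rule card_UN_le[OF D(2)])
    also have "\<dots> \<le> (\<Sum>d\<in>D. 1)" by (rule sum_mono) (use piece in auto)
    finally show ?thesis by simp
  qed
  then show ?thesis by blast
qed

text \<open>Hence the set of points with more than k preimages is a finite union of the closed sets
  of the hypothesis, so it is relatively closed: the number of preimages is upper semicontinuous.\<close>
lemma closedin_fibre_card_gt: "closedin (top_of_set M) {x\<in>M. k < card (preim M f x)}"
proof -
  obtain N where N: "\<forall>x. card (preim M f x) \<le> N" using fibre_card_bounded by blast
  have "{x\<in>M. k < card (preim M f x)} = (\<Union>j\<in>{k<..N}. {x\<in>M. card (preim M f x) = j})"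
    using N by (auto simp: le_less_trans)
  moreover have "closedin (top_of_set M) (\<Union>j\<in>{k<..N}. {x\<in>M. card (preim M f x) = j})"
    by (rule closedin_Union) (use closed_fibre_card in auto)
  ultimately show ?thesis by simp
qed

lemma local_inverse_branch:
  assumes y: "y \<in> M"
  obtains iv where "(iv \<longlongrightarrow> y) (at (f y) within M)"
    and "eventually (\<lambda>x. iv x \<in> preim M f x) (at (f y) within M)"
proof -
  obtain U where U: "y \<in> U" "openin (top_of_set M) U" "openin (top_of_set M) (f ` U)"
      "homeomorphism U (f ` U) f (inv_into U f)"
    using y by (rule local_chart)
  define iv where "iv = inv_into U f"
  have fy: "f y \<in> f ` U" using U(1) by blast
  have "continuous_on (f ` U) iv" and "iv (f y) = y"
    using U(1,4) unfolding iv_def homeomorphism_def by blast+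
  then have "(iv \<longlongrightarrow> y) (at (f y) within f ` U)"
    using fy unfolding continuous_on_def by metis
  then have "(iv \<longlongrightarrow> y) (at (f y) within M)"
    using at_within_openin[OF U(3) fy] by simp
  moreover have "iv x \<in> preim M f x" if x: "x \<in> f ` U" for x
  proof -
    have "iv x \<in> U" "f (iv x) = x"
      using U(4) x unfolding iv_def homeomorphism_def by blast+
    moreover have "U \<subseteq> M" using U(2) openin_subset by force
    ultimately show ?thesis by (auto simp: preim_def)
  qed
  then have "eventually (\<lambda>x. iv x \<in> preim M f x) (at (f y) within M)"
    using eventually_in_openin[OF U(3) fy] by (auto elim: eventually_mono)
  ultimately show ?thesis by (rule that)
qed

lemma local_inverse_branches:
  assumes x0: "x0 \<in> M"
  obtains iv where "\<And>y. y \<in> preim M f x0 \<Longrightarrow> (iv y \<longlongrightarrow> y) (at x0 within M)"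
    and "eventually (\<lambda>x. \<forall>y\<in>preim M f x0. iv y x \<in> preim M f x) (at x0 within M)"
proof -
  have "\<exists>g. (g \<longlongrightarrow> y) (at x0 within M) \<and> eventually (\<lambda>x. g x \<in> preim M f x) (at x0 within M)"
    if y: "y \<in> preim M f x0" for y
  proof -
    have "y \<in> M" "f y = x0" using y by (auto simp: preim_def)
    then show ?thesis using local_inverse_branch by metis
  qed
  then obtain iv where iv: "\<And>y. y \<in> preim M f x0 \<Longrightarrow> (iv y \<longlongrightarrow> y) (at x0 within M) \<and>
      eventually (\<lambda>x. iv y x \<in> preim M f x) (at x0 within M)"
    by metis
  moreover have "eventually (\<lambda>x. \<forall>y\<in>preim M f x0. iv y x \<in> preim M f x) (at x0 within M)"
    using iv finite_preim by (intro eventually_ball_finite) auto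
  ultimately show ?thesis using that by blast
qed

text \<open>Near x0 the inverse branches through the preimages of x0 enumerate all preimages:
  they are eventually pairwise distinct, and by upper semicontinuity of the number of
  preimages there can be no further ones.\<close>
lemma inverse_branches_bij:
  assumes x0: "x0 \<in> M"
    and lim: "\<And>y. y \<in> preim M f x0 \<Longrightarrow> (iv y \<longlongrightarrow> y) (at x0 within M)"
    and into: "eventually (\<lambda>x. \<forall>y\<in>preim M f x0. iv y x \<in> preim M f x) (at x0 within M)"
  shows "eventually (\<lambda>x. bij_betw (\<lambda>y. iv y x) (preim M f x0) (preim M f x)) (at x0 within M)"
proof -
  define Y where "Y = preim M f x0"
  have distinct: "eventually (\<lambda>x. \<forall>y\<in>Y. \<forall>y'\<in>Y. y \<noteq> y' \<longrightarrow> iv y x \<noteq> iv y' x)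
      (at x0 within M)"
    using finite_preim lim by (intro eventually_distinct_of_tendsto) (auto simp: Y_def)
  have "openin (top_of_set M) (M - {x\<in>M. card Y < card (preim M f x)})"
    using closedin_fibre_card_gt by (simp add: openin_diff)
  then have "eventually (\<lambda>x. x \<in> M - {x\<in>M. card Y < card (preim M f x)}) (at x0 within M)"
    by (rule eventually_in_openin) (simp add: x0 Y_def)
  then have few: "eventually (\<lambda>x. card (preim M f x) \<le> card Y) (at x0 within M)"
    by (rule eventually_mono) auto
  have into_Y: "eventually (\<lambda>x. \<forall>y\<in>Y. iv y x \<in> preim M f x) (at x0 within M)"
    using into by (simp add: Y_def)
  have "eventually (\<lambda>x. bij_betw (\<lambda>y. iv y x) Y (preim M f x)) (at x0 within M)"
    using distinct few into_Y
  proof eventually_elim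
    case (elim x)
    have inj: "inj_on (\<lambda>y. iv y x) Y"
      using elim(1) unfolding inj_on_def by metis
    have sub: "(\<lambda>y. iv y x) ` Y \<subseteq> preim M f x" using elim(3) by blast
    have "card (preim M f x) \<le> card ((\<lambda>y. iv y x) ` Y)"
      using elim(2) card_image[OF inj] by simp
    then have "(\<lambda>y. iv y x) ` Y = preim M f x"
      using card_subset_eq[OF finite_preim sub] card_mono[OF finite_preim sub] by linarith
    then show ?case using inj by (simp add: bij_betw_def)
  qed
  then show ?thesis by (simp add: Y_def)
qed

text \<open>Continuity of L_\<phi> g at x0: near x0 it is a finite sum over the branches through the
  preimages of x0 of continuous functions.\<close>
lemma continuous_on_transfer_op:
  assumes \<phi>: "continuous_on M \<phi>" and g: "continuous_on M g"
  shows "continuous_on M (transfer_op M f \<phi> g)"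
  unfolding continuous_on_def
proof
  fix x0 assume x0: "x0 \<in> M"
  obtain iv where lim: "\<And>y. y \<in> preim M f x0 \<Longrightarrow> (iv y \<longlongrightarrow> y) (at x0 within M)"
    and into: "eventually (\<lambda>x. \<forall>y\<in>preim M f x0. iv y x \<in> preim M f x) (at x0 within M)"
    using local_inverse_branches[OF x0] by blast
  define F where "F x = (\<Sum>y\<in>preim M f x0. exp (\<phi> (iv y x)) * g (iv y x))" for x
  have bij: "eventually (\<lambda>x. bij_betw (\<lambda>y. iv y x) (preim M f x0) (preim M f x)) (at x0 within M)"
    using x0 lim into by (rule inverse_branches_bij)
  have weight_cont: "continuous_on M (\<lambda>z. exp (\<phi> z) * g z)"
    using \<phi> g by (intro continuous_intros)
  have "((\<lambda>x. exp (\<phi> (iv y x)) * g (iv y x)) \<longlongrightarrow> exp (\<phi> y) * g y) (at x0 within M)"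
    if y: "y \<in> preim M f x0" for y
  proof (rule continuous_on_tendsto_compose[OF weight_cont lim[OF y]])
    show "y \<in> M" using y by (simp add: preim_def)
    show "eventually (\<lambda>x. iv y x \<in> M) (at x0 within M)"
      using into y by (auto simp: preim_def elim: eventually_mono)
  qed
  then have "(F \<longlongrightarrow> transfer_op M f \<phi> g x0) (at x0 within M)"
    unfolding F_def transfer_op_def by (rule tendsto_sum)
  moreover have "eventually (\<lambda>x. F x = transfer_op M f \<phi> g x) (at x0 within M)"
    using bij unfolding F_def transfer_op_def by (rule eventually_mono) (rule sum.reindex_bij_betw)
  ultimately show "(transfer_op M f \<phi> g \<longlongrightarrow> transfer_op M f \<phi> g x0) (at x0 within M)"
    by (rule Lim_transform_eventually)
qed

end

context finite_local_homeo
begin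

lemma continuous_on_transfer_op_funpow:
  assumes "continuous_on M \<phi>" "continuous_on M g"
  shows "continuous_on M ((transfer_op M f \<phi> ^^ n) g)"
  by (induction n) (use assms continuous_on_transfer_op in auto)

lemma sum_preim_funpow_Suc:
  "(\<Sum>z\<in>preim M f x. \<Sum>w\<in>preim M (f ^^ n) z. g w) = (\<Sum>w\<in>preim M (f ^^ Suc n) x. g w)"
proof -
  have "(\<Sum>z\<in>preim M f x. \<Sum>w\<in>{w \<in> preim M (f ^^ Suc n) x. (f ^^ n) w = z}. g w)
      = (\<Sum>w\<in>preim M (f ^^ Suc n) x. g w)"
    by (rule sum.group[OF finite_preim_funpow finite_preim]) (auto simp: preim_def funpow_in)
  moreover have "{w \<in> preim M (f ^^ Suc n) x. (f ^^ n) w = z} = preim M (f ^^ n) z"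
    if "z \<in> preim M f x" for z
    using that by (auto simp: preim_def)
  ultimately show ?thesis by (metis (no_types, lifting) sum.cong)
qed

lemma transfer_op_funpow_nonneg:
  assumes "\<And>y. 0 \<le> g y"
  shows "0 \<le> (transfer_op M f \<phi> ^^ n) g x"
proof (induction n arbitrary: x)
  case (Suc n)
  then show ?case by (auto simp: transfer_op_def intro: sum_nonneg)
qed (simp add: assms)

text \<open>Crude bound on the iterated transfer operator: each of the n weights is at most
  exp S, so the iterate is dominated by the sum of g over the n-th preimages.\<close>
lemma transfer_op_funpow_le:
  assumes \<phi>: "\<And>y. y \<in> M \<Longrightarrow> \<phi> y \<le> S" and g: "\<And>y. 0 \<le> g y" and x: "x \<in> M"
  shows "(transfer_op M f \<phi> ^^ n) g x \<le> exp (real n * S) * (\<Sum>w\<in>preim M (f ^^ n) x. g w)"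
  using x
proof (induction n arbitrary: x)
  case 0
  then have "preim M (\<lambda>y. y) x = {x}" by (auto simp: preim_def)
  then show ?case by simp
next
  case (Suc n)
  let ?G = "(transfer_op M f \<phi> ^^ n) g"
  have "(transfer_op M f \<phi> ^^ Suc n) g x = (\<Sum>z\<in>preim M f x. exp (\<phi> z) * ?G z)"
    by (simp add: transfer_op_def)
  also have "\<dots> \<le> (\<Sum>z\<in>preim M f x. exp S * (exp (real n * S) * (\<Sum>w\<in>preim M (f ^^ n) z. g w)))"
  proof (rule sum_mono)
    fix z assume z: "z \<in> preim M f x"
    then have "z \<in> M" by (simp add: preim_def)
    then show "exp (\<phi> z) * ?G z \<le> exp S * (exp (real n * S) * (\<Sum>w\<in>preim M (f ^^ n) z. g w))"
      using Suc.IH \<phi> transfer_op_funpow_nonneg[OF g] by (intro mult_mono) auto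
  qed
  also have "\<dots> = exp (real (Suc n) * S) * (\<Sum>z\<in>preim M f x. \<Sum>w\<in>preim M (f ^^ n) z. g w)"
  proof -
    have "exp (real (Suc n) * S) = exp S * exp (real n * S)"
      by (simp add: exp_add[symmetric] algebra_simps)
    then show ?thesis by (simp add: sum_distrib_left mult.assoc)
  qed
  also have "\<dots> = exp (real (Suc n) * S) * (\<Sum>w\<in>preim M (f ^^ Suc n) x. g w)"
    by (simp add: sum_preim_funpow_Suc)
  finally show ?case .
qed

text \<open>The set of points visiting A at least a proportion gamma of the first n times is a
  finite union of finite intersections of the open sets (f^j)^{-1} A.\<close>
lemma openin_freq_set:
  assumes A: "openin (top_of_set M) A" and \<gamma>: "0 < \<gamma>"
  shows "openin (top_of_set M) (freq_set M f A \<gamma> n)"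
proof (cases "n = 0")
  case True
  then have "freq_set M f A \<gamma> n = {}" using \<gamma> by (auto simp: freq_set_def)
  then show ?thesis by simp
next
  case False
  have visit: "openin (top_of_set M) (M \<inter> (f ^^ j) -` A)" for j
    by (rule continuous_openin_preimage[OF continuous_on_funpow _ A]) (use funpow_in in auto)
  have "openin (top_of_set M) (M \<inter> (\<Inter>j\<in>J. (f ^^ j) -` A))" if "J \<subseteq> {..<n}" for J
  proof -
    have "finite J" using that finite_subset by blast
    then have "openin (top_of_set M) ((\<Inter>j\<in>J. M \<inter> (f ^^ j) -` A) \<inter> topspace (top_of_set M))"
      using visit by (intro openin_INT)
    moreover have "(\<Inter>j\<in>J. M \<inter> (f ^^ j) -` A) \<inter> M = M \<inter> (\<Inter>j\<in>J. (f ^^ j) -` A)" by blast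
    ultimately show ?thesis by simp
  qed
  then show ?thesis
    unfolding freq_set_eq_Union[OF False] by (intro openin_Union) auto
qed
end

lemma indicator_openin_approx:
  assumes M: "closed M" and U: "openin (top_of_set M) U"
  obtains g :: "nat \<Rightarrow> 'a::metric_space \<Rightarrow> real"
  where "\<And>k. continuous_on M (g k)" "\<And>k x. 0 \<le> g k x \<and> g k x \<le> 1"
    "\<And>k x. x \<in> M - U \<Longrightarrow> g k x = 0" "\<And>x. x \<in> M \<Longrightarrow> (\<lambda>k. g k x) \<longlonglongrightarrow> indicator U x"
proof (cases "M - U = {}")
  case True
  then have "x \<in> M \<Longrightarrow> x \<in> U" for x by blast
  then show ?thesis by (intro that[of "\<lambda>_ _. 1"]) (use True in auto)
next
  case False
  define g where "g k x = min 1 (real k * infdist x (M - U))" for k :: nat and x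
  have closed: "closed (M - U)"
    using closedin_closed_trans[OF _ M] U by (simp add: closedin_diff)
  have lim: "(\<lambda>k. g k x) \<longlonglongrightarrow> indicator U x" if x: "x \<in> M" for x
  proof (cases "x \<in> U")
    case True
    then have d: "infdist x (M - U) > 0"
      using infdist_pos_not_in_closed[OF closed False] by blast
    have "eventually (\<lambda>k. 1 < real k * infdist x (M - U)) sequentially"
      using d by real_asymp
    then have "eventually (\<lambda>k. g k x = 1) sequentially"
      by (rule eventually_mono) (simp add: g_def)
    then show ?thesis using True by (simp add: tendsto_eventually)
  next
    case False
    then show ?thesis using x by (simp add: g_def)
  qed
  show ?thesis
  proof (rule that[OF _ _ _ lim])
    show "continuous_on M (g k)" for k unfolding g_def by (intro continuous_intros)
    show "0 \<le> g k x \<and> g k x \<le> 1" for k x by (simp add: g_def infdist_nonneg)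
    show "g k x = 0" if "x \<in> M - U" for k x using that by (simp add: g_def)
  qed
qed

lemma openin_sets_restrict_borel:
  assumes "openin (top_of_set M) U"
  shows "U \<in> sets (restrict_space borel M)"
proof -
  obtain T where "open T" "U = M \<inter> T" using assms by (auto simp: openin_open)
  then show ?thesis by (auto simp: sets_restrict_space)
qed

lemma measure_openin_le:
  fixes \<nu> :: "'a::metric_space measure"
  assumes P: "prob_space \<nu>" and sets: "sets \<nu> = sets (restrict_space borel M)"
    and space: "space \<nu> = M" and M: "closed M" and U: "openin (top_of_set M) U"
    and bound: "\<And>g. continuous_on M g \<Longrightarrow> (\<And>x. 0 \<le> g x \<and> g x \<le> 1) \<Longrightarrow>
         (\<And>x. x \<in> M - U \<Longrightarrow> g x = 0) \<Longrightarrow> integral\<^sup>L \<nu> g \<le> C"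
  shows "measure \<nu> U \<le> C"
proof -
  interpret prob_space \<nu> by (rule P)
  obtain g :: "nat \<Rightarrow> 'a \<Rightarrow> real" where g_cont: "\<And>k. continuous_on M (g k)" and g_01: "\<And>k x. 0 \<le> g k x \<and> g k x \<le> 1"
    and g_off: "\<And>k x. x \<in> M - U \<Longrightarrow> g k x = 0"
    and g_lim: "\<And>x. x \<in> M \<Longrightarrow> (\<lambda>k. g k x) \<longlonglongrightarrow> indicator U x"
    using indicator_openin_approx[OF M U] by blast
  have U_sets: "U \<in> sets \<nu>" using openin_sets_restrict_borel[OF U] sets by simp
  have lim: "(\<lambda>k. integral\<^sup>L \<nu> (g k)) \<longlonglongrightarrow> integral\<^sup>L \<nu> (indicator U)"
  proof (rule integral_dominated_convergence[where w="\<lambda>_. 1"])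
    show "g k \<in> borel_measurable \<nu>" for k
      using borel_measurable_continuous_on_restrict[OF g_cont] measurable_cong_sets[OF sets refl]
      by blast
    show "indicator U \<in> borel_measurable \<nu>" using U_sets by simp
    show "integrable \<nu> (\<lambda>_. 1::real)" by simp
    show "AE x in \<nu>. norm (g k x) \<le> 1" for k using g_01 by simp
    show "AE x in \<nu>. (\<lambda>k. g k x) \<longlonglongrightarrow> indicator U x"
      using g_lim space by (intro AE_I2) simp
  qed
  have "integral\<^sup>L \<nu> (g k) \<le> C" for k
    using bound[OF g_cont] g_01 g_off by blast
  then have "integral\<^sup>L \<nu> (indicator U) \<le> C"
    using LIMSEQ_le_const2[OF lim] by blast
  then show ?thesis using U_sets by simp
qed

section \<open>The eigenmeasure estimate\<close>

lemma sum_le_card_support: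
  assumes "finite P" "\<And>w. w \<in> P - U \<Longrightarrow> g w = 0" "\<And>w. g w \<le> (1::real)"
  shows "(\<Sum>w\<in>P. g w) \<le> real (card (P \<inter> U))"
proof -
  have "(\<Sum>w\<in>P. g w) = (\<Sum>w\<in>P \<inter> U. g w) + (\<Sum>w\<in>P - U. g w)"
    by (rule sum.Int_Diff[OF assms(1)])
  also have "(\<Sum>w\<in>P - U. g w) = 0" using assms(2) by simp
  also have "(\<Sum>w\<in>P \<inter> U. g w) \<le> (\<Sum>w\<in>P \<inter> U. 1)" using assms(3) by (intro sum_mono)
  finally show ?thesis by simp
qed

text \<open>A Borel probability \<nu> on M with L_\<phi>^* \<nu> = lam \<nu>, expressed through integrals of continuous
  functions, for a continuous potential \<phi>.\<close>
locale transfer_eigenmeasure = finite_local_homeo M f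
  for M :: "'a::metric_space set" and f :: "'a \<Rightarrow> 'a" +
  fixes \<phi> :: "'a \<Rightarrow> real" and \<nu> :: "'a measure" and lam :: real
  assumes continuous_\<phi>: "continuous_on M \<phi>"
    and prob: "prob_space \<nu>"
    and sets_\<nu>: "sets \<nu> = sets (restrict_space borel M)" and space_\<nu>: "space \<nu> = M"
    and lam_pos: "lam > 0"
    and eigen: "\<forall>g. continuous_on M g \<longrightarrow>
                  integral\<^sup>L \<nu> (transfer_op M f \<phi> g) = lam * integral\<^sup>L \<nu> g"
begin

text \<open>Since L_\<phi> preserves continuity, the eigen-equation iterates.\<close>
lemma eigen_funpow:
  assumes "continuous_on M g"
  shows "integral\<^sup>L \<nu> ((transfer_op M f \<phi> ^^ n) g) = lam ^ n * integral\<^sup>L \<nu> g"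
proof (induction n)
  case (Suc n)
  have "continuous_on M ((transfer_op M f \<phi> ^^ n) g)"
    by (rule continuous_on_transfer_op_funpow[OF continuous_\<phi> assms])
  then show ?case using eigen Suc by simp
qed simp

text \<open>Indeed for g approximating the indicator of
  U, lam^n times the integral of g is the integral of the n-th iterate of the transfer
  operator applied to g, which is pointwise at most exp (n sup \<phi>) N.\<close>
lemma measure_openin_le_preim_count:
  assumes U: "openin (top_of_set M) U"
    and \<phi>: "\<And>y. y \<in> M \<Longrightarrow> \<phi> y \<le> S"
    and count: "\<And>x. x \<in> M \<Longrightarrow> card (preim M (f ^^ n) x \<inter> U) \<le> N"
  shows "measure \<nu> U \<le> exp (real n * S) * real N / lam ^ n"
proof (rule measure_openin_le[OF prob sets_\<nu> space_\<nu> compact_imp_closed[OF compact_M] U])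
  interpret prob_space \<nu> by (rule prob)
  fix g :: "'a \<Rightarrow> real"
  assume g_cont: "continuous_on M g" and g_01: "\<And>x. 0 \<le> g x \<and> g x \<le> 1"
    and g_off: "\<And>x. x \<in> M - U \<Longrightarrow> g x = 0"
  have g_nonneg: "\<And>y. 0 \<le> g y" using g_01 by simp
  define K where "K = exp (real n * S) * real N"
  have "(transfer_op M f \<phi> ^^ n) g x \<le> K" if x: "x \<in> M" for x
  proof -
    have "(transfer_op M f \<phi> ^^ n) g x \<le> exp (real n * S) * (\<Sum>w\<in>preim M (f ^^ n) x. g w)"
      by (rule transfer_op_funpow_le[OF \<phi> g_nonneg x])
    also have "(\<Sum>w\<in>preim M (f ^^ n) x. g w) \<le> real (card (preim M (f ^^ n) x \<inter> U))"
      using g_01 g_off by (intro sum_le_card_support finite_preim_funpow) (auto simp: preim_def)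
    also have "\<dots> \<le> real N" using count[OF x] by simp
    finally show ?thesis by (simp add: K_def mult_left_mono)
  qed
  then have "integral\<^sup>L \<nu> ((transfer_op M f \<phi> ^^ n) g) \<le> integral\<^sup>L \<nu> (\<lambda>_. K)"
    using space_\<nu> by (intro integral_mono_AE') (auto simp: K_def)
  then have "lam ^ n * integral\<^sup>L \<nu> g \<le> K"
    using eigen_funpow[OF g_cont] prob_space by simp
  then show "integral\<^sup>L \<nu> g \<le> exp (real n * S) * real N / lam ^ n"
    using lam_pos by (simp add: K_def field_simps)
qed

end

section \<open>Counting itineraries\<close>

text \<open>Words of length n over {1..k0} with at least (rather than more than) gamma n letters \<le> q.\<close>
definition itin_set_ge :: "nat \<Rightarrow> nat \<Rightarrow> real \<Rightarrow> nat \<Rightarrow> nat list set" where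
  "itin_set_ge k0 q \<gamma> n = {ws. length ws = n \<and> set ws \<subseteq> {1..k0} \<and>
       real (card {j. j < n \<and> ws ! j \<le> q}) \<ge> \<gamma> * real n}"

lemma finite_itin_set: "finite (itin_set k0 q \<gamma> n)"
  by (rule finite_subset[OF _ finite_lists_length_eq[of "{1..k0}" n]]) (auto simp: itin_set_def)

lemma finite_itin_set_ge: "finite (itin_set_ge k0 q \<gamma> n)"
  by (rule finite_subset[OF _ finite_lists_length_eq[of "{1..k0}" n]]) (auto simp: itin_set_ge_def)

text \<open>A word with exactly gamma n small letters (gamma < 1) has a large letter; changing it to 1
  gives a word with more than gamma n small letters.\<close>
lemma itin_set_ge_subset:
  assumes "\<gamma> < 1" "1 \<le> q" "q \<le> k0" "1 \<le> n"
  shows "itin_set_ge k0 q \<gamma> n \<subseteq>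
    itin_set k0 q \<gamma> n \<union> (\<lambda>(w, p, a). w[p := a]) ` (itin_set k0 q \<gamma> n \<times> {..<n} \<times> {1..k0})"
    (is "_ \<subseteq> ?I \<union> ?R")
proof
  fix w assume "w \<in> itin_set_ge k0 q \<gamma> n"
  then have len: "length w = n" and letters: "set w \<subseteq> {1..k0}"
    and ge: "real (card {j. j < n \<and> w ! j \<le> q}) \<ge> \<gamma> * real n"
    by (auto simp: itin_set_ge_def)
  show "w \<in> ?I \<union> ?R"
  proof (cases "real (card {j. j < n \<and> w ! j \<le> q}) > \<gamma> * real n")
    case True
    then show ?thesis using len letters by (auto simp: itin_set_def)
  next
    case False
    then have eq: "real (card {j. j < n \<and> w ! j \<le> q}) = \<gamma> * real n" using ge by linarith
    have "\<gamma> * real n < real n" using assms by simp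
    then have "card {j. j < n \<and> w ! j \<le> q} < card {..<n}" using eq by simp
    then have "\<exists>p<n. \<not> w ! p \<le> q"
    proof (rule contrapos_pp)
      assume "\<not> (\<exists>p<n. \<not> w ! p \<le> q)"
      then have "{j. j < n \<and> w ! j \<le> q} = {..<n}" by auto
      then show "\<not> card {j. j < n \<and> w ! j \<le> q} < card {..<n}" by simp
    qed
    then obtain p where p: "p < n" "\<not> w ! p \<le> q" by blast
    define w' where "w' = w[p := 1]"
    have "{j. j < n \<and> w' ! j \<le> q} = insert p {j. j < n \<and> w ! j \<le> q}"
      using p len assms by (auto simp: w'_def nth_list_update)
    moreover have "p \<notin> {j. j < n \<and> w ! j \<le> q}" using p by simp
    ultimately have "card {j. j < n \<and> w' ! j \<le> q} = Suc (card {j. j < n \<and> w ! j \<le> q})"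
      by simp
    then have "real (card {j. j < n \<and> w' ! j \<le> q}) > \<gamma> * real n" using eq by simp
    moreover have "set w' \<subseteq> {1..k0}"
      using set_update_subset_insert[of w p 1] letters assms by (auto simp: w'_def)
    moreover have "length w' = n" using len by (simp add: w'_def)
    ultimately have "w' \<in> ?I" by (simp add: itin_set_def)
    moreover have "w ! p \<in> {1..k0}" using letters p len nth_mem by blast
    moreover have "w = w'[p := w ! p]" by (simp add: w'_def)
    ultimately have "w \<in> ?R" using p by (intro image_eqI[where x="(w', p, w ! p)"]) auto
    then show ?thesis by simp
  qed
qed

lemma card_itin_set_ge_le:
  assumes "\<gamma> < 1" "1 \<le> q" "q \<le> k0" "1 \<le> n"
  shows "real (card (itin_set_ge k0 q \<gamma> n)) \<le> (1 + real n * real k0) * real (card (itin_set k0 q \<gamma> n))"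
proof -
  let ?I = "itin_set k0 q \<gamma> n"
  let ?R = "(\<lambda>(w, p, a). w[p := a]) ` (?I \<times> {..<n} \<times> {1..k0})"
  have "card (itin_set_ge k0 q \<gamma> n) \<le> card (?I \<union> ?R)"
    using itin_set_ge_subset[OF assms] finite_itin_set by (intro card_mono) auto
  also have "\<dots> \<le> card ?I + card ?R" by (rule card_Un_le)
  also have "card ?R \<le> card (?I \<times> {..<n} \<times> {1..k0})"
    using finite_itin_set by (intro card_image_le) simp
  also have "card (?I \<times> {..<n} \<times> {1..k0}) = card ?I * n * k0"
    by (simp add: card_cartesian_product)
  finally have "card (itin_set_ge k0 q \<gamma> n) \<le> card ?I + card ?I * n * k0" by simp
  then have "real (card (itin_set_ge k0 q \<gamma> n)) \<le> real (card ?I) + real (card ?I) * real n * real k0"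
    by (metis of_nat_add of_nat_le_iff of_nat_mult)
  then show ?thesis by (simp add: algebra_simps)
qed

lemma eq_of_common_itinerary:
  assumes inj: "\<forall>i\<in>I. inj_on f (P i)"
    and common: "\<forall>j<k. \<exists>i\<in>I. (f ^^ j) y \<in> P i \<and> (f ^^ j) y' \<in> P i"
    and eq: "(f ^^ k) y = (f ^^ k) y'"
  shows "y = y'"
  using common eq
proof (induction k arbitrary: y y')
  case (Suc k)
  have "\<forall>j<k. \<exists>i\<in>I. (f ^^ j) (f y) \<in> P i \<and> (f ^^ j) (f y') \<in> P i"
  proof (intro allI impI)
    fix j assume "j < k"
    then obtain i where "i \<in> I" "(f ^^ Suc j) y \<in> P i \<and> (f ^^ Suc j) y' \<in> P i"
      using Suc.prems(1) by blast
    then show "\<exists>i\<in>I. (f ^^ j) (f y) \<in> P i \<and> (f ^^ j) (f y') \<in> P i"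
      by (auto simp: funpow_Suc_right simp del: funpow.simps)
  qed
  moreover have "(f ^^ k) (f y) = (f ^^ k) (f y')"
    using Suc.prems(2) by (simp add: funpow_Suc_right del: funpow.simps)
  ultimately have "f y = f y'" by (rule Suc.IH)
  moreover obtain i where "i \<in> I" "y \<in> P i" "y' \<in> P i"
    using Suc.prems(1)[rule_format, of 0] by auto
  ultimately show ?case using inj by (meson inj_onD)
qed simp

lemma itinerary_labelling:
  fixes P :: "nat \<Rightarrow> 'a set" and k0 q :: nat
  assumes cover: "M \<subseteq> (\<Union>i\<in>{1..k0}. P i)" and q: "q \<le> k0" and A: "A \<subseteq> (\<Union>i\<in>{1..q}. P i)"
  obtains label where "\<And>z. z \<in> M \<Longrightarrow> label z \<in> {1..k0} \<and> z \<in> P (label z) \<and> (z \<in> A \<longrightarrow> label z \<le> q)"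
proof -
  have "\<exists>i. i \<in> {1..k0} \<and> z \<in> P i \<and> (z \<in> A \<longrightarrow> i \<le> q)" if "z \<in> M" for z
    using that cover A q by (cases "z \<in> A") fastforce+
  then show ?thesis using that by metis
qed

text \<open>Coding by itineraries: with such a labelling, the itinerary of an n-th preimage of x
  lying in the frequency set is a word with at least gamma n letters \<le> q, and it determines
  the preimage.\<close>
lemma card_preim_freq_set_le:
  assumes maps: "f ` M \<subseteq> M"
    and cover: "M \<subseteq> (\<Union>i\<in>{1..k0}. P i)" and inj: "\<forall>i\<in>{1..k0}. inj_on f (P i)"
    and q: "q \<le> k0" and A: "A \<subseteq> (\<Union>i\<in>{1..q}. P i)" and n: "1 \<le> n"
  shows "card (preim M (f ^^ n) x \<inter> freq_set M f A \<gamma> n) \<le> card (itin_set_ge k0 q \<gamma> n)"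
proof -
  obtain label where label: "\<And>z. z \<in> M \<Longrightarrow>
      label z \<in> {1..k0} \<and> z \<in> P (label z) \<and> (z \<in> A \<longrightarrow> label z \<le> q)"
    using itinerary_labelling[OF cover q A] by blast
  have iter_in: "(f ^^ j) y \<in> M" if "y \<in> M" for y j
    using that by (induction j) (use maps in auto)
  define word where "word y = map (\<lambda>j. label ((f ^^ j) y)) [0..<n]" for y
  define S where "S = preim M (f ^^ n) x \<inter> freq_set M f A \<gamma> n"
  have "inj_on word S"
  proof (rule inj_onI)
    fix y y' assume y: "y \<in> S" and y': "y' \<in> S" and w: "word y = word y'"
    then have M: "y \<in> M" "y' \<in> M" by (auto simp: S_def preim_def)
    have "\<forall>j<n. \<exists>i\<in>{1..k0}. (f ^^ j) y \<in> P i \<and> (f ^^ j) y' \<in> P i"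
    proof (intro allI impI)
      fix j assume j: "j < n"
      have "label ((f ^^ j) y) = label ((f ^^ j) y')"
        using arg_cong[OF w, of "\<lambda>ws. ws ! j"] j by (simp add: word_def)
      then show "\<exists>i\<in>{1..k0}. (f ^^ j) y \<in> P i \<and> (f ^^ j) y' \<in> P i"
        using label[OF iter_in[OF M(1)]] label[OF iter_in[OF M(2)]] by metis
    qed
    moreover have "(f ^^ n) y = (f ^^ n) y'" using y y' by (auto simp: S_def preim_def)
    ultimately show "y = y'" by (rule eq_of_common_itinerary[OF inj])
  qed
  moreover have "word ` S \<subseteq> itin_set_ge k0 q \<gamma> n"
  proof
    fix w assume "w \<in> word ` S"
    then obtain y where y: "y \<in> S" and wy: "w = word y" by blast
    have M: "y \<in> M" using y by (auto simp: S_def preim_def)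
    have "\<gamma> * real n \<le> real (card {j. j < n \<and> (f ^^ j) y \<in> A})"
      using y n by (auto simp: S_def freq_set_def pos_le_divide_eq)
    also have "card {j. j < n \<and> (f ^^ j) y \<in> A} \<le> card {j. j < n \<and> w ! j \<le> q}"
      using label[OF iter_in[OF M]] by (intro card_mono) (auto simp: wy word_def)
    finally have "\<gamma> * real n \<le> real (card {j. j < n \<and> w ! j \<le> q})" by simp
    moreover have "set w \<subseteq> {1..k0}" using label[OF iter_in[OF M]] by (auto simp: wy word_def)
    ultimately show "w \<in> itin_set_ge k0 q \<gamma> n" by (simp add: itin_set_ge_def wy word_def)
  qed
  ultimately have "card S \<le> card (itin_set_ge k0 q \<gamma> n)"
    by (rule card_inj_on_le[OF _ _ finite_itin_set_ge])
  then show ?thesis by (simp add: S_def)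
qed

lemma card_itin_set_eventually_le:
  assumes "c_gamma k0 q \<gamma> < ereal a"
  shows "eventually (\<lambda>n. real (card (itin_set k0 q \<gamma> n)) \<le> exp (real n * a)) sequentially"
proof -
  have "eventually (\<lambda>n. (if card (itin_set k0 q \<gamma> n) = 0 then -\<infinity>
      else ereal (ln (real (card (itin_set k0 q \<gamma> n))) / real n)) < ereal a) sequentially"
    using assms unfolding c_gamma_def by (rule Limsup_lessD)
  then show ?thesis using eventually_gt_at_top[of 0]
  proof eventually_elim
    case (elim n)
    show ?case
    proof (cases "card (itin_set k0 q \<gamma> n) = 0")
      case False
      then have "ln (real (card (itin_set k0 q \<gamma> n))) < real n * a"
        using elim by (simp add: divide_less_eq mult.commute)
      then have "exp (ln (real (card (itin_set k0 q \<gamma> n)))) < exp (real n * a)" by simp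
      then show ?thesis using False by simp
    qed simp
  qed
qed

text \<open>Passing from the strict to the non-strict threshold costs a polynomial factor, which is
  absorbed by an arbitrarily small exponential rate e.\<close>
lemma card_itin_set_ge_eventually_le:
  assumes "\<gamma> < 1" "1 \<le> q" "q \<le> k0" "c_gamma k0 q \<gamma> < ereal a" "e > 0"
  shows "eventually (\<lambda>n. real (card (itin_set_ge k0 q \<gamma> n)) \<le> exp (real n * (a + e))) sequentially"
proof -
  have "eventually (\<lambda>n. 1 + real n * real k0 \<le> exp (real n * e)) sequentially"
    using \<open>e > 0\<close> by real_asymp
  with card_itin_set_eventually_le[OF assms(4)] eventually_ge_at_top[of 1]
  show ?thesis
  proof eventually_elim
    case (elim n)
    have "real (card (itin_set_ge k0 q \<gamma> n)) \<le> (1 + real n * real k0) * real (card (itin_set k0 q \<gamma> n))"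
      using assms elim by (intro card_itin_set_ge_le) auto
    also have "\<dots> \<le> exp (real n * e) * exp (real n * a)"
      using elim by (intro mult_mono) auto
    finally show ?case by (simp add: exp_add[symmetric] algebra_simps)
  qed
qed

text \<open>Borel--Cantelli: exponentially small measures are summable, so almost every point lies in
  only finitely many of the sets.\<close>
lemma AE_finite_of_exponential_decay:
  assumes "prob_space \<mu>" and sets: "\<And>n. B n \<in> sets \<mu>" and "c > 0"
    and decay: "eventually (\<lambda>n. measure \<mu> (B n) \<le> exp (- c * real n)) sequentially"
  shows "AE x in \<mu>. finite {n. x \<in> B n}"
proof -
  interpret prob_space \<mu> by fact
  have "summable (\<lambda>n. exp (- c) ^ n)" using \<open>c > 0\<close> by (intro summable_geometric) simp
  moreover have "eventually (\<lambda>n. norm (measure \<mu> (B n)) \<le> exp (- c) ^ n) sequentially"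
    using decay by (rule eventually_mono) (simp add: exp_of_nat_mult[symmetric] mult.commute)
  ultimately have "summable (\<lambda>n. measure \<mu> (B n))"
    by (rule summable_comparison_test_ev[rotated])
  then have "AE x in \<mu>. eventually (\<lambda>n. x \<in> space \<mu> - B n) sequentially"
    using sets by (intro borel_cantelli_AE1) (auto simp: less_top[symmetric])
  then show ?thesis
  proof (rule AE_mp, intro AE_I2 impI)
    fix x assume "eventually (\<lambda>n. x \<in> space \<mu> - B n) sequentially"
    then obtain N where "\<forall>n\<ge>N. x \<notin> B n" by (auto simp: eventually_sequentially)
    then have "{n. x \<in> B n} \<subseteq> {..<N}" by (auto simp: not_less[symmetric])
    then show "finite {n. x \<in> B n}" by (rule finite_subset) simp
  qed
qed

context transfer_eigenmeasure
begin

lemma freq_set_exponential_decay: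
  assumes cover: "M \<subseteq> (\<Union>i\<in>{1..k0}. P i)" and inj: "\<forall>i\<in>{1..k0}. inj_on f (P i)"
    and q: "1 \<le> q" "q \<le> k0"
    and A: "openin (top_of_set M) A" "A \<subseteq> (\<Union>i\<in>{1..q}. P i)"
    and \<gamma>: "0 < \<gamma>" "\<gamma> < 1" "c_gamma k0 q \<gamma> < ereal a"
    and \<phi>: "\<And>y. y \<in> M \<Longrightarrow> \<phi> y \<le> S" and lam: "exp b \<le> lam" and "e > 0"
  shows "eventually (\<lambda>n. measure \<nu> (freq_set M f A \<gamma> n) \<le> exp (real n * (S + a + e - b)))
           sequentially"
  using card_itin_set_ge_eventually_le[OF \<gamma>(2) q \<gamma>(3) \<open>e > 0\<close>] eventually_ge_at_top[of 1]
proof eventually_elim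
  case (elim n)
  have "exp (real n * b) \<le> lam ^ n"
    unfolding exp_of_nat_mult using lam by (intro power_mono) auto
  have "measure \<nu> (freq_set M f A \<gamma> n)
      \<le> exp (real n * S) * real (card (itin_set_ge k0 q \<gamma> n)) / lam ^ n"
    using openin_freq_set[OF A(1) \<gamma>(1)] \<phi>
      card_preim_freq_set_le[OF maps_into cover inj q(2) A(2) elim(2)]
    by (rule measure_openin_le_preim_count)
  also have "\<dots> \<le> exp (real n * S) * exp (real n * (a + e)) / exp (real n * b)"
    using elim(1) \<open>exp (real n * b) \<le> lam ^ n\<close> by (intro frac_le mult_left_mono) auto
  also have "\<dots> = exp (real n * (S + a + e - b))"
    by (simp add: exp_add[symmetric] exp_diff[symmetric] algebra_simps)
  finally show ?case .
qed

end

text \<open>Instantiate the decay estimate with S = sup \<phi>, b = h + inf \<phi>, a = log q + \<epsilon>0/4 and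
  e = \<epsilon>0/4; the choice of \<epsilon>0 makes the rate at least \<epsilon>0/2, and Borel--Cantelli finishes.\<close>
theorem proposition4p4:
  fixes M :: "'a::metric_space set" and m :: nat
    and f :: "'a \<Rightarrow> 'a" and Lf :: "'a \<Rightarrow> real" and \<phi> :: "'a \<Rightarrow> real"
    and P :: "nat \<Rightarrow> 'a set" and k0 q :: nat and A :: "'a set"
    and \<epsilon>0 \<gamma> \<sigma> L c lam :: real and \<nu> :: "'a measure"
  defines "h \<equiv> degree_entropy M f"
    and "supphi \<equiv> (SUP x\<in>M. \<phi> x)" and "infphi \<equiv> (INF x\<in>M. \<phi> x)"
  assumes M: "compact M" "M \<noteq> {}" "covering_dim M m" "besicovitch_property M"
    and f_lh: "local_homeomorphism_on M f"
    and f_fin: "\<forall>x\<in>M. finite (preim M f x)"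
    and f_closed: "\<forall>k. closedin (top_of_set M) {x\<in>M. card (preim M f x) = k}"
    and Lf_pos: "\<forall>x\<in>M. Lf x > 0" and Lf_bdd: "bdd_above (Lf ` M)"
    and Lf_lip: "\<forall>x\<in>M. \<exists>U. x \<in> U \<and> openin (top_of_set M) U \<and> inj_on f U \<and>
                   (\<forall>y\<in>f ` U. \<forall>z\<in>f ` U. dist (inv_into U f y) (inv_into U f z) \<le> Lf x * dist y z)"
    and h_preim: "\<forall>x\<in>M. real (card (preim M f x)) \<ge> exp h"
    and \<phi>_holder: "holder_continuous_on M \<phi>"
    \<comment> \<open>(H2)\<close>
    and P_sub: "\<forall>i\<in>{1..k0}. P i \<subseteq> M" and P_cover: "M \<subseteq> (\<Union>i\<in>{1..k0}. P i)"
    and P_inj: "\<forall>i\<in>{1..k0}. inj_on f (P i)"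
    and q: "1 \<le> q" "q \<le> k0" "real q < exp h"
    and A: "openin (top_of_set M) A" "A \<subseteq> (\<Union>i\<in>{1..q}. P i)"
    \<comment> \<open>(P)\<close>
    and hypP: "supphi - infphi < h - ln (real q)"
    \<comment> \<open>choice of \<epsilon>0 and \<gamma>\<close>
    and \<epsilon>0: "\<epsilon>0 > 0" "supphi - infphi + \<epsilon>0 < h - ln (real q)"
    and \<gamma>: "0 < \<gamma>" "\<gamma> < 1" "c_gamma k0 q \<gamma> < ereal (ln (real q) + \<epsilon>0 / 4)"
    \<comment> \<open>(H1)\<close>
    and H1: "\<sigma> > 1" "L > 0" "c > 0"
      "\<forall>x\<in>A. Lf x \<le> L" "\<forall>x\<in>M - A. Lf x \<le> 1 / \<sigma>"
      "\<sigma> powr (-(1 - \<gamma>)) * L powr \<gamma> < exp (-2 * c)" "exp (-2 * c) < 1"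
      "supphi - infphi < h - ln (real q) - \<epsilon>0 - real m * ln L"
    \<comment> \<open>the eigenmeasure\<close>
    and lam: "lam \<ge> exp (h + infphi)"
    and \<nu>: "prob_space \<nu>" "sets \<nu> = sets (restrict_space borel M)" "space \<nu> = M"
    and eig: "\<forall>g. continuous_on M g \<longrightarrow>
               integral\<^sup>L \<nu> (transfer_op M f \<phi> g) = lam * integral\<^sup>L \<nu> g"
  shows "(\<forall>\<^sub>F n in sequentially. measure \<nu> (freq_set M f A \<gamma> n) \<le> exp (- \<epsilon>0 * real n / 2))
       \<and> (AE x in \<nu>. finite {n. n \<ge> 1 \<and> x \<in> freq_set M f A \<gamma> n})"
proof -
  have \<phi>_cont: "continuous_on M \<phi>" by (rule holder_continuous_on_imp_continuous_on[OF \<phi>_holder])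
  have lam_pos: "lam > 0" using lam exp_gt_zero by (rule order.strict_trans2[rotated])
  interpret transfer_eigenmeasure M f \<phi> \<nu> lam
    by (intro transfer_eigenmeasure.intro finite_local_homeo.intro transfer_eigenmeasure_axioms.intro)
      (fact M(1) f_lh f_fin f_closed \<phi>_cont \<nu> lam_pos eig)+
  have \<phi>_le: "\<phi> y \<le> supphi" if "y \<in> M" for y
    using compact_imp_bounded[OF compact_continuous_image[OF \<phi>_cont M(1)]] that
    unfolding supphi_def by (intro cSUP_upper bounded_imp_bdd_above)
  have "\<epsilon>0 / 4 > 0" using \<epsilon>0(1) by simp
  define B where "B n = freq_set M f A \<gamma> n" for n
  have rate: "exp (real n * (supphi + (ln (real q) + \<epsilon>0 / 4) + \<epsilon>0 / 4 - (h + infphi)))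
      \<le> exp (- (\<epsilon>0 / 2) * real n)" for n
  proof -
    have "real n * (supphi + (ln (real q) + \<epsilon>0 / 4) + \<epsilon>0 / 4 - (h + infphi)) \<le> real n * (- (\<epsilon>0 / 2))"
      using \<epsilon>0(2) by (intro mult_left_mono) auto
    then show ?thesis by (simp add: mult.commute)
  qed
  have "eventually (\<lambda>n. measure \<nu> (B n) \<le> exp (real n * (supphi + (ln (real q) + \<epsilon>0 / 4)
          + \<epsilon>0 / 4 - (h + infphi)))) sequentially"
    unfolding B_def by (rule freq_set_exponential_decay[OF P_cover P_inj q(1,2) A \<gamma> \<phi>_le lam
        \<open>\<epsilon>0 / 4 > 0\<close>])
  then have decay: "eventually (\<lambda>n. measure \<nu> (B n) \<le> exp (- (\<epsilon>0 / 2) * real n)) sequentially"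
    by (rule eventually_mono) (use rate in \<open>blast intro: order.trans\<close>)
  have "B n \<in> sets \<nu>" for n
    using openin_sets_restrict_borel[OF openin_freq_set[OF A(1) \<gamma>(1)]] \<nu>(2) by (simp add: B_def)
  then have "AE x in \<nu>. finite {n. x \<in> B n}"
    by (rule AE_finite_of_exponential_decay[OF \<nu>(1) _ _ decay]) (use \<epsilon>0(1) in simp)
  then have "AE x in \<nu>. finite {n. n \<ge> 1 \<and> x \<in> B n}"
    by (rule AE_mp) (auto intro: finite_subset)
  moreover have "eventually (\<lambda>n. measure \<nu> (B n) \<le> exp (- \<epsilon>0 * real n / 2)) sequentially"
    using decay by (rule eventually_mono) simp
  ultimately show ?thesis unfolding B_def by blast
qed

end
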